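(* Let $A$, $\Omega$ be finite nonempty sets and $\mu_0$ a prior on $\Omega$ with $\mu_0(\omega)>0$ for all $\omega$. The Lebesgue measure of the set of felicitous environments in $[0,1]^{2|A||\Omega|}$ is at least $\frac{1}{|A|^{|A|}}$.
   Context: $A=\{a_1,\dots,a_{|A|}\}$. An environment is a pair of functions $u_S,u_R:A\times\Omega\to[0,1]$, identified with a point of $[0,1]^{2|A||\Omega|}$. For each $i$, let $\Omega_i^{u_S}=\{\omega: a_i\in\arg\max_{a\in A}u_S(a,\omega)\}$. The environment is felicitous if for every $i$ with $\Omega_i^{u_S}\neq\emptyset$, $a_i\in\arg\max_{a\in A}\sum_{\omega\in\Omega_i^{u_S}}\mu_0(\omega)u_R(a,\omega)$. *)

theory Defs
  imports "HOL-Analysis.Analysis"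
begin

definition argmax_set :: "('a \<Rightarrow> real) \<Rightarrow> 'a set" where
  "argmax_set f = {a. \<forall>b. f b \<le> f a}"

definition Omega_of :: "('a \<Rightarrow> 'w \<Rightarrow> real) \<Rightarrow> 'a \<Rightarrow> 'w set" where
  "Omega_of uS a = {\<omega>. a \<in> argmax_set (\<lambda>b. uS b \<omega>)}"

definition felicitous ::
  "('w \<Rightarrow> real) \<Rightarrow> ('a \<Rightarrow> 'w \<Rightarrow> real) \<Rightarrow> ('a \<Rightarrow> 'w \<Rightarrow> real) \<Rightarrow> bool" where
  "felicitous \<mu>0 uS uR \<longleftrightarrow>
     (\<forall>a. Omega_of uS a \<noteq> {} \<longrightarrow>
        a \<in> argmax_set (\<lambda>b. \<Sum>\<omega>\<in>Omega_of uS a. \<mu>0 \<omega> * uR b \<omega>))"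

text \<open>An environment is a point of [0,1]^{2|A||Omega|}, indexed by
  (A x Omega) + (A x Omega): Inl-coordinates give u_S, Inr-coordinates give u_R.\<close>
definition felicitous_envs ::
  "('w \<Rightarrow> real) \<Rightarrow> (('a \<times> 'w) + ('a \<times> 'w) \<Rightarrow> real) set" where
  "felicitous_envs \<mu>0 = {e. (\<forall>i. e i \<in> {0..1}) \<and>
      felicitous \<mu>0 (\<lambda>a \<omega>. e (Inl (a, \<omega>))) (\<lambda>a \<omega>. e (Inr (a, \<omega>)))}"

end

(*
  Almost surely the sender has no ties, so an environment lies in one of the regions
  R_s, s : Omega -> A, where s w is the sender's unique best action in state w; there
  Omega_a = s^-1(a). For c : A -> A, swapping the receiver's payoffs for a and c a in
  the states of s^-1(a) is a measure-preserving involution of R_s, and choosing c a as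
  the receiver's best response to the prior restricted to s^-1(a) makes the environment
  felicitous. So the |A|^|A| preimages of the felicitous part of R_s cover R_s, and
  summing over s gives the bound.
*)
theory Submission
  imports Defs "HOL-Combinatorics.Transposition"
begin

abbreviation lborel_Pi :: "('i \<Rightarrow> real) measure" where
  "lborel_Pi \<equiv> Pi\<^sub>M UNIV (\<lambda>_. lborel)"

lemma pred_borel_le [measurable]:
  fixes f g :: "'a \<Rightarrow> real"
  assumes "f \<in> borel_measurable M" and "g \<in> borel_measurable M"
  shows "Measurable.pred M (\<lambda>x. f x \<le> g x)"
  using assms unfolding pred_def by (rule borel_measurable_le)

lemma pred_borel_less [measurable]:
  fixes f g :: "'a \<Rightarrow> real"
  assumes "f \<in> borel_measurable M" and "g \<in> borel_measurable M"
  shows "Measurable.pred M (\<lambda>x. f x < g x)"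
  using assms unfolding pred_def by (rule borel_measurable_less)

lemma measurable_PiM_comp:
  "(\<lambda>e. e \<circ> p) \<in> Pi\<^sub>M UNIV (\<lambda>_. M) \<rightarrow>\<^sub>M Pi\<^sub>M UNIV (\<lambda>_. M)"
  unfolding comp_def by (rule measurable_PiM_single') (auto simp: space_PiM)

lemma (in sigma_finite_measure) distr_PiM_comp_bij:
  fixes p :: "'i::finite \<Rightarrow> 'i"
  assumes "bij p"
  shows "distr (Pi\<^sub>M UNIV (\<lambda>_. M)) (Pi\<^sub>M UNIV (\<lambda>_. M)) (\<lambda>e. e \<circ> p) = Pi\<^sub>M UNIV (\<lambda>_. M)"
proof -
  interpret product_sigma_finite "\<lambda>_::'i. M"
    by standard
  show ?thesis
  proof (rule PiM_eqI)
    fix A :: "'i \<Rightarrow> 'a set"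
    assume A: "\<And>i. i \<in> UNIV \<Longrightarrow> A i \<in> sets M"
    then have "\<forall>i. A i \<subseteq> space M"
      using sets.sets_into_space by blast
    then have "(\<lambda>e. e \<circ> p) -` Pi\<^sub>E UNIV A \<inter> space (Pi\<^sub>M UNIV (\<lambda>_. M)) = Pi\<^sub>E UNIV (\<lambda>j. A (inv p j))"
      using assms
      by (auto simp: space_PiM PiE_UNIV_domain Pi_iff bij_inv_eq_iff) (metis bij_inv_eq_iff)+
    then have "emeasure (distr (Pi\<^sub>M UNIV (\<lambda>_. M)) (Pi\<^sub>M UNIV (\<lambda>_. M)) (\<lambda>e. e \<circ> p)) (Pi\<^sub>E UNIV A)
        = (\<Prod>j\<in>UNIV. emeasure M (A (inv p j)))"
      using A by (simp add: emeasure_distr[OF measurable_PiM_comp] emeasure_PiM)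
    also have "\<dots> = (\<Prod>i\<in>UNIV. emeasure M (A i))"
      using prod.reindex[of "inv p" UNIV "\<lambda>i. emeasure M (A i)"] assms
      by (simp add: bij_imp_bij_inv bij_is_inj bij_is_surj)
    finally show "emeasure (distr (Pi\<^sub>M UNIV (\<lambda>_. M)) (Pi\<^sub>M UNIV (\<lambda>_. M)) (\<lambda>e. e \<circ> p)) (Pi\<^sub>E UNIV A)
        = (\<Prod>i\<in>UNIV. emeasure M (A i))" .
  qed simp_all
qed

lemma (in sigma_finite_measure) emeasure_PiM_vimage_comp_bij:
  fixes p :: "'i::finite \<Rightarrow> 'i"
  assumes "bij p" and "X \<in> sets (Pi\<^sub>M UNIV (\<lambda>_. M))"
  shows "emeasure (Pi\<^sub>M UNIV (\<lambda>_. M)) ((\<lambda>e. e \<circ> p) -` X \<inter> space (Pi\<^sub>M UNIV (\<lambda>_. M)))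
    = emeasure (Pi\<^sub>M UNIV (\<lambda>_. M)) X"
  using emeasure_distr[OF measurable_PiM_comp assms(2), of p] assms(1)
  by (simp add: distr_PiM_comp_bij)

interpretation lborel_Pi: product_sigma_finite "\<lambda>_::'i. lborel :: real measure"
  by standard

lemma null_sets_lborel_Pi_diagonal:
  fixes i j :: "'i::finite"
  assumes "i \<noteq> j"
  shows "{e. e i = e j} \<in> null_sets (lborel_Pi :: ('i \<Rightarrow> real) measure)"
proof -
  let ?J = "UNIV - {i}"
  let ?D = "{e :: 'i \<Rightarrow> real. e i = e j}"
  have UNIV_split: "(UNIV :: 'i set) = {i} \<union> ?J" by auto
  have "{e \<in> space lborel_Pi. e i = e j} \<in> sets lborel_Pi"
    by measurable
  then have D: "?D \<in> sets lborel_Pi"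
    by (simp add: space_PiM)
  have fibre_null: "emeasure (Pi\<^sub>M ?J (\<lambda>_. lborel))
      ((\<lambda>y. merge {i} ?J (x, y)) -` ?D \<inter> space (Pi\<^sub>M ?J (\<lambda>_. lborel))) = 0"
    for x :: "'i \<Rightarrow> real"
  proof -
    have "(\<lambda>y. merge {i} ?J (x, y)) -` ?D \<inter> space (Pi\<^sub>M ?J (\<lambda>_. lborel))
        = Pi\<^sub>E ?J (\<lambda>k. if k = j then {x i} else UNIV)"
      using assms by (auto simp: merge_def space_PiM PiE_def Pi_def extensional_def split: if_splits)
    then show ?thesis
      using assms by (simp add: lborel_Pi.emeasure_PiM prod_zero)
  qed
  have "emeasure (Pi\<^sub>M ({i} \<union> ?J) (\<lambda>_. lborel)) ?D = 0"
    using D UNIV_split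
    by (subst lborel_Pi.emeasure_fold_integral) (simp_all add: fibre_null del: vimage_Collect_eq)
  then show ?thesis
    using D UNIV_split by (auto intro: null_setsI)
qed

lemma AE_lborel_Pi_injective:
  "AE e in (lborel_Pi :: ('i::finite \<Rightarrow> real) measure). \<forall>i j. i \<noteq> j \<longrightarrow> e i \<noteq> e j"
proof -
  have "AE e in lborel_Pi. i \<noteq> j \<longrightarrow> e i \<noteq> e j" for i j :: 'i
  proof (cases "i = j")
    case False
    then show ?thesis
      by (intro AE_I'[OF null_sets_lborel_Pi_diagonal]) auto
  qed simp
  then show ?thesis
    by (intro eventually_all_finite allI)
qed

lemma argmax_set_nonempty: "argmax_set (f :: 'a::finite \<Rightarrow> real) \<noteq> {}"
proof -
  have "Max (range f) \<in> range f"
    by (intro Max_in) auto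
  then obtain m where "f m = Max (range f)"
    by (metis imageE)
  then have "m \<in> argmax_set f"
    by (simp add: argmax_set_def)
  then show ?thesis
    by auto
qed

lemma argmax_set_eq_singleton_iff: "argmax_set f = {m} \<longleftrightarrow> (\<forall>b. b \<noteq> m \<longrightarrow> f b < f m)"
proof
  assume max: "argmax_set f = {m}"
  show "\<forall>b. b \<noteq> m \<longrightarrow> f b < f m"
  proof (intro allI impI)
    fix b
    assume "b \<noteq> m"
    then have "b \<notin> argmax_set f" and "m \<in> argmax_set f"
      using max by auto
    then obtain c where "f b < f c" and "f c \<le> f m"
      by (auto simp: argmax_set_def not_le)
    then show "f b < f m"
      by simp
  qed
next
  assume "\<forall>b. b \<noteq> m \<longrightarrow> f b < f m"
  then show "argmax_set f = {m}"
    by (auto simp: argmax_set_def less_imp_le) (meson not_le)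
qed

lemma felicitous_iff_sum:
  fixes \<mu>0 :: "'w::finite \<Rightarrow> real"
  shows "felicitous \<mu>0 uS uR \<longleftrightarrow>
    (\<forall>a. (\<exists>\<omega>. \<forall>b. uS b \<omega> \<le> uS a \<omega>) \<longrightarrow>
      (\<forall>b. (\<Sum>\<omega>\<in>UNIV. if \<forall>b'. uS b' \<omega> \<le> uS a \<omega> then \<mu>0 \<omega> * uR b \<omega> else 0)
         \<le> (\<Sum>\<omega>\<in>UNIV. if \<forall>b'. uS b' \<omega> \<le> uS a \<omega> then \<mu>0 \<omega> * uR a \<omega> else 0)))"
  by (simp add: felicitous_def Omega_of_def argmax_set_def sum.If_cases Int_def)

lemma sets_felicitous_envs:
  fixes \<mu>0 :: "'w::finite \<Rightarrow> real"
  shows "(felicitous_envs \<mu>0 :: (('a::finite \<times> 'w) + ('a \<times> 'w) \<Rightarrow> real) set) \<in> sets lborel_Pi"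
proof -
  have "{e \<in> space lborel_Pi. (\<forall>i. e i \<in> {0..1}) \<and>
      felicitous \<mu>0 (\<lambda>a \<omega>. e (Inl (a, \<omega>))) (\<lambda>a \<omega>. e (Inr (a::'a, \<omega>)))} \<in> sets lborel_Pi"
    unfolding felicitous_iff_sum atLeastAtMost_iff by measurable
  then show ?thesis
    by (simp add: felicitous_envs_def space_PiM)
qed

definition sender_best_region :: "('w \<Rightarrow> 'a) \<Rightarrow> (('a \<times> 'w) + ('a \<times> 'w) \<Rightarrow> real) set" where
  "sender_best_region s =
     {e \<in> Pi\<^sub>E UNIV (\<lambda>_. {0..1}). \<forall>\<omega>. argmax_set (\<lambda>b. e (Inl (b, \<omega>))) = {s \<omega>}}"

lemma sets_sender_best_region:
  "sender_best_region (s :: 'w::finite \<Rightarrow> 'a::finite) \<in> sets lborel_Pi"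
proof -
  have "{e :: ('a \<times> 'w) + ('a \<times> 'w) \<Rightarrow> real \<in> space lborel_Pi. (\<forall>i. 0 \<le> e i \<and> e i \<le> 1) \<and>
      (\<forall>\<omega> b. b \<noteq> s \<omega> \<longrightarrow> e (Inl (b, \<omega>)) < e (Inl (s \<omega>, \<omega>)))} \<in> sets lborel_Pi"
    by measurable
  then show ?thesis
    by (simp add: sender_best_region_def argmax_set_eq_singleton_iff space_PiM PiE_UNIV_domain Pi_iff)
qed

lemma disjoint_family_sender_best_region:
  "disjoint_family (sender_best_region :: ('w \<Rightarrow> 'a) \<Rightarrow> _)"
  by (auto simp: disjoint_family_on_def sender_best_region_def)

lemma Omega_of_sender_best_region:
  "e \<in> sender_best_region s \<Longrightarrow> Omega_of (\<lambda>a \<omega>. e (Inl (a, \<omega>))) a = s -` {a}"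
  by (auto simp: sender_best_region_def Omega_of_def)

lemma AE_in_sender_best_region:
  "AE e in lborel_Pi. e \<in> Pi\<^sub>E UNIV (\<lambda>_. {0..1}) \<longrightarrow>
     (\<exists>s :: 'w::finite \<Rightarrow> 'a::finite. e \<in> sender_best_region s)"
  using AE_lborel_Pi_injective
proof eventually_elim
  fix e :: "('a \<times> 'w) + ('a \<times> 'w) \<Rightarrow> real"
  assume inj: "\<forall>i j. i \<noteq> j \<longrightarrow> e i \<noteq> e j"
  have "\<exists>m. argmax_set (\<lambda>b. e (Inl (b, \<omega>))) = {m}" for \<omega>
  proof -
    obtain m where "m \<in> argmax_set (\<lambda>b. e (Inl (b, \<omega>)))"
      using argmax_set_nonempty by blast
    then have "argmax_set (\<lambda>b. e (Inl (b, \<omega>))) = {m}"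
      unfolding argmax_set_eq_singleton_iff using inj by (auto simp: argmax_set_def order.strict_iff_order)
    then show ?thesis ..
  qed
  then obtain s where "\<And>\<omega>. argmax_set (\<lambda>b. e (Inl (b, \<omega>))) = {s \<omega>}"
    by metis
  then show "e \<in> Pi\<^sub>E UNIV (\<lambda>_. {0..1}) \<longrightarrow> (\<exists>s. e \<in> sender_best_region s)"
    by (auto simp: sender_best_region_def)
qed

definition relabel_receiver ::
    "('w \<Rightarrow> 'a) \<Rightarrow> ('a \<Rightarrow> 'a) \<Rightarrow> ('a \<times> 'w) + ('a \<times> 'w) \<Rightarrow> ('a \<times> 'w) + ('a \<times> 'w)" where
  "relabel_receiver s c = map_sum id (\<lambda>(b, \<omega>). (Transposition.transpose (s \<omega>) (c (s \<omega>)) b, \<omega>))"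

lemma relabel_receiver_involutory [simp]: "relabel_receiver s c (relabel_receiver s c i) = i"
  by (cases i) (auto simp: relabel_receiver_def)

lemma bij_relabel_receiver: "bij (relabel_receiver s c)"
  by (metis bijI' relabel_receiver_involutory)

lemma sender_best_region_relabel_receiver:
  "e \<in> sender_best_region s \<Longrightarrow> e \<circ> relabel_receiver s c \<in> sender_best_region s"
  by (auto simp: sender_best_region_def relabel_receiver_def)

lemma ex_relabel_receiver_felicitous:
  fixes \<mu>0 :: "'w::finite \<Rightarrow> real" and s :: "'w \<Rightarrow> 'a::finite"
  assumes e: "e \<in> sender_best_region s"
  shows "\<exists>c. e \<circ> relabel_receiver s c \<in> felicitous_envs \<mu>0"
proof -
  define V where "V a b = (\<Sum>\<omega>\<in>s -` {a}. \<mu>0 \<omega> * e (Inr (b, \<omega>)))" for a b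
  have "\<forall>a. \<exists>m. m \<in> argmax_set (V a)"
    using argmax_set_nonempty by blast
  then obtain c where c: "\<And>a. c a \<in> argmax_set (V a)"
    by metis
  let ?e' = "e \<circ> relabel_receiver s c"
  have e': "?e' \<in> sender_best_region s"
    using e by (rule sender_best_region_relabel_receiver)
  have payoff: "(\<Sum>\<omega>\<in>s -` {a}. \<mu>0 \<omega> * ?e' (Inr (b, \<omega>))) = V a (Transposition.transpose a (c a) b)"
    for a b
    unfolding V_def by (intro sum.cong) (auto simp: relabel_receiver_def)
  have "felicitous \<mu>0 (\<lambda>a \<omega>. ?e' (Inl (a, \<omega>))) (\<lambda>a \<omega>. ?e' (Inr (a, \<omega>)))"
    unfolding felicitous_def Omega_of_sender_best_region[OF e']
  proof (intro allI impI)
    fix a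
    show "a \<in> argmax_set (\<lambda>b. \<Sum>\<omega>\<in>s -` {a}. \<mu>0 \<omega> * ?e' (Inr (b, \<omega>)))"
      unfolding payoff using c[of a] by (simp add: argmax_set_def)
  qed
  moreover have "\<forall>i. ?e' i \<in> {0..1}"
    using e' by (auto simp: sender_best_region_def)
  ultimately show ?thesis
    unfolding felicitous_envs_def by blast
qed

lemma emeasure_sender_best_region_le:
  fixes \<mu>0 :: "'w::finite \<Rightarrow> real" and s :: "'w \<Rightarrow> 'a::finite"
  shows "emeasure lborel_Pi (sender_best_region s)
    \<le> of_nat (CARD('a) ^ CARD('a)) * emeasure lborel_Pi (felicitous_envs \<mu>0 \<inter> sender_best_region s)"
proof -
  let ?X = "felicitous_envs \<mu>0 \<inter> sender_best_region s"
  let ?Y = "\<lambda>c. (\<lambda>e. e \<circ> relabel_receiver s c) -` ?X \<inter> space lborel_Pi"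
  have X: "?X \<in> sets lborel_Pi"
    using sets_felicitous_envs sets_sender_best_region by (rule sets.Int)
  then have Y: "?Y c \<in> sets lborel_Pi" for c
    by (rule measurable_sets[OF measurable_PiM_comp])
  have "sender_best_region s \<subseteq> (\<Union>c. ?Y c)"
  proof
    fix e
    assume e: "e \<in> sender_best_region s"
    then obtain c where "e \<circ> relabel_receiver s c \<in> felicitous_envs \<mu>0"
      using ex_relabel_receiver_felicitous by blast
    moreover have "e \<circ> relabel_receiver s c \<in> sender_best_region s"
      using e by (rule sender_best_region_relabel_receiver)
    ultimately show "e \<in> (\<Union>c. ?Y c)"
      by (auto simp: space_PiM)
  qed
  then have "emeasure lborel_Pi (sender_best_region s) \<le> emeasure lborel_Pi (\<Union>c. ?Y c)"
    using Y by (intro emeasure_mono sets.finite_UN) (auto simp del: vimage_Int)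
  also have "\<dots> \<le> (\<Sum>c\<in>UNIV. emeasure lborel_Pi (?Y c))"
    using Y by (intro emeasure_subadditive_finite) (auto simp del: vimage_Int)
  also have "\<dots> = (\<Sum>c\<in>(UNIV :: ('a \<Rightarrow> 'a) set). emeasure lborel_Pi ?X)"
    using X by (intro sum.cong refl lborel.emeasure_PiM_vimage_comp_bij bij_relabel_receiver)
  also have "\<dots> = of_nat (CARD('a) ^ CARD('a)) * emeasure lborel_Pi ?X"
    by (simp add: card_fun)
  finally show ?thesis .
qed

theorem lemma7:
  fixes \<mu>0 :: "'w::finite \<Rightarrow> real"
  assumes "\<forall>\<omega>. \<mu>0 \<omega> > 0"
    and "(\<Sum>\<omega>\<in>UNIV. \<mu>0 \<omega>) = 1"
  shows "emeasure (Pi\<^sub>M UNIV (\<lambda>_. lborel)) (felicitous_envs \<mu>0 :: (('a::finite \<times> 'w) + ('a \<times> 'w) \<Rightarrow> real) set)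
           \<ge> ennreal (1 / real (CARD('a) ^ CARD('a)))"
proof -
  let ?F = "felicitous_envs \<mu>0 :: (('a \<times> 'w) + ('a \<times> 'w) \<Rightarrow> real) set"
  let ?R = "sender_best_region :: ('w \<Rightarrow> 'a) \<Rightarrow> _"
  let ?N = "CARD('a) ^ CARD('a)"
  have "1 = emeasure lborel_Pi (Pi\<^sub>E UNIV (\<lambda>_. {0..1}) :: (('a \<times> 'w) + ('a \<times> 'w) \<Rightarrow> real) set)"
    by (simp add: lborel_Pi.emeasure_PiM)
  also have "\<dots> \<le> emeasure lborel_Pi (\<Union>s. ?R s)"
    using AE_in_sender_best_region sets_sender_best_region by (intro emeasure_mono_AE) auto
  also have "\<dots> = (\<Sum>s\<in>UNIV. emeasure lborel_Pi (?R s))"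
    using sets_sender_best_region disjoint_family_sender_best_region
    by (intro sum_emeasure[symmetric]) auto
  also have "\<dots> \<le> (\<Sum>s\<in>UNIV. of_nat ?N * emeasure lborel_Pi (?F \<inter> ?R s))"
    by (intro sum_mono emeasure_sender_best_region_le)
  also have "\<dots> = of_nat ?N * emeasure lborel_Pi (\<Union>s. ?F \<inter> ?R s)"
    unfolding sum_distrib_left[symmetric] using sets_felicitous_envs sets_sender_best_region
    by (subst sum_emeasure) (auto intro: disjoint_family_on_bisimulation[OF disjoint_family_sender_best_region])
  also have "\<dots> \<le> of_nat ?N * emeasure lborel_Pi ?F"
    using sets_felicitous_envs by (intro mult_left_mono emeasure_mono) auto
  finally have "1 / of_nat ?N \<le> emeasure lborel_Pi ?F"
    by (intro divide_le_posI_ennreal) (simp_all add: ennreal_of_nat_eq_real_of_nat del: of_nat_power)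
  then show ?thesis
    by (simp add: divide_ennreal[symmetric] ennreal_of_nat_eq_real_of_nat)
qed

end
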